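(* Let $n\in\mathbb N_0$, $j\in\mathbb Z$, $s\in\mathbb N_0$ and $1\le\ell\le a^d_n$. Then for all $x\in\mathbb B^d$ and $\xi\in\mathbb S^{d-1}$, $$\Delta^sY^{n,j}_\ell(x)=Y^{n,j-s}_\ell(x)\qquad\text{and}\qquad\Delta^sY^{n,j}_\ell(\xi)=\delta_{s,j}Y^n_\ell(\xi).$$
   Context: $\mathbb B^d$ unit ball, $\mathbb S^{d-1}$ unit sphere in $\mathbb R^d$; $(a)_0=1$, $(a)_m=a(a+1)\cdots(a+m-1)$. $\mathcal H^d_n$: homogeneous harmonic polynomials of degree $n$, $a^d_n=\dim\mathcal H^d_n$, $\{Y^n_\ell\}_{\ell=1}^{a^d_n}$ an orthonormal basis of $\mathcal H^d_n$ with respect to the normalized surface measure on $\mathbb S^{d-1}$. For $n,j\in\mathbb N_0$ let $(c^{n,j}_i)_{0\le i\le j}$ be the unique solution of the linear system $$4^k\sum_{i=k}^j(-i)_k(-k)_{i-k}\frac{(n+d/2)_k}{(n+d/2)_{i-k}}c_i=\delta_{k,j},\qquad 0\le k\le j,$$ and set $Y^{n,j}_\ell(x)=\sum_{i=0}^jc^{n,j}_i(1-\|x\|^2)^iY^n_\ell(x)$; for $j<0$ set $Y^{n,j}_\ell:=0$. *)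

theory Defs
  imports "HOL-Analysis.Analysis"
begin

definition laplacian :: "('a::euclidean_space \<Rightarrow> real) \<Rightarrow> 'a \<Rightarrow> real" where
  "laplacian f x = (\<Sum>b\<in>Basis. deriv (deriv (\<lambda>t. f (x + t *\<^sub>R b))) 0)"

definition homogeneous_poly :: "nat \<Rightarrow> ('a::euclidean_space \<Rightarrow> real) \<Rightarrow> bool" where
  "homogeneous_poly n f \<longleftrightarrow>
     (\<exists>A c. finite A \<and> (\<forall>\<alpha>\<in>A. (\<Sum>b\<in>Basis. \<alpha> b) = n) \<and>
        (\<forall>x. f x = (\<Sum>\<alpha>\<in>A. c \<alpha> * (\<Prod>b\<in>Basis. (x \<bullet> b) ^ \<alpha> b))))"

definition harmonic_hom :: "nat \<Rightarrow> ('a::euclidean_space \<Rightarrow> real) set" where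
  "harmonic_hom n = {f. homogeneous_poly n f \<and> (\<forall>x. laplacian f x = 0)}"

text \<open>The coefficients c^{n,j}_i (for i \<le> j; set to 0 for i > j), as the unique solution
  of the linear system of the paper; d is the dimension.\<close>
definition coef :: "nat \<Rightarrow> nat \<Rightarrow> nat \<Rightarrow> (nat \<Rightarrow> real)" where
  "coef d n j = (THE c. (\<forall>i>j. c i = 0) \<and>
     (\<forall>k\<le>j. 4 ^ k * (\<Sum>i=k..j. pochhammer (- real i) k * pochhammer (- real k) (i - k)
            * pochhammer (real n + real d / 2) k / pochhammer (real n + real d / 2) (i - k) * c i)
          = (if k = j then 1 else 0)))"

definition Ynj :: "nat \<Rightarrow> int \<Rightarrow> ('a::euclidean_space \<Rightarrow> real) \<Rightarrow> 'a \<Rightarrow> real" where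
  "Ynj n j Y x = (if j < 0 then 0 else
     (\<Sum>i=0..nat j. coef DIM('a) n (nat j) i * (1 - (norm x)\<^sup>2) ^ i * Y x))"

end

theory Submission
  imports Defs "HOL-Computational_Algebra.Polynomial"
begin

text \<open>Write Y^{n,j}(x) = G(1 - |x|^2) Y(x) with a polynomial profile G. The product rule,
  Euler's identity x . grad Y = n Y and the harmonicity of Y give
  Delta(G(1 - |x|^2) Y) = (L G)(1 - |x|^2) Y with L G = 4 (1 - s) G'' - 4 mu G' and mu = n + d/2.
  On coefficient sequences L is a two-term lowering operator, and a three-term recurrence
  linking consecutive rows of the upper triangular system matrix shows that L maps the solution
  for j to a solution for j - 1; by uniqueness it is c^{n,j-1}, hence Delta Y^{n,j} = Y^{n,j-1}.
  On the sphere only the constant coefficient survives, and row k = 0 of the system says that it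
  is delta_{j,0}.\<close>

lemma upper_triangular_system_solvable:
  fixes a :: "nat \<Rightarrow> nat \<Rightarrow> real"
  assumes diag: "\<forall>k\<le>j. a k k \<noteq> 0"
  shows "\<exists>c. (\<forall>i>j. c i = 0) \<and> (\<forall>k\<le>j. (\<Sum>i=k..j. a k i * c i) = b k)"
proof -
  have "\<exists>c. (\<forall>i>j. c i = 0) \<and> (\<forall>k. j - m \<le> k \<and> k \<le> j \<longrightarrow> (\<Sum>i=k..j. a k i * c i) = b k)"
    if "m \<le> j" for m
    using that
  proof (induction m)
    case 0
    show ?case
      by (rule exI[of _ "\<lambda>i. if i = j then b j / a j j else 0"]) (use diag in auto)
  next
    case (Suc m)
    then obtain c where c_supp: "\<forall>i>j. c i = 0"
      and c_eq: "\<forall>k. j - m \<le> k \<and> k \<le> j \<longrightarrow> (\<Sum>i=k..j. a k i * c i) = b k"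
      by auto
    define k0 where "k0 = j - Suc m"
    have k0: "k0 < j - m" "k0 \<le> j" using Suc.prems by (auto simp: k0_def)
    have "a k0 k0 \<noteq> 0" using diag k0 by auto
    define c' where "c' = c(k0 := (b k0 - (\<Sum>i=Suc k0..j. a k0 i * c i)) / a k0 k0)"
    have "(\<Sum>i=k..j. a k i * c' i) = b k" if "j - Suc m \<le> k" "k \<le> j" for k
    proof (cases "k = k0")
      case True
      have "(\<Sum>i=k0..j. a k0 i * c' i) = a k0 k0 * c' k0 + (\<Sum>i=Suc k0..j. a k0 i * c' i)"
        using k0 by (simp add: sum.atLeast_Suc_atMost)
      also have "(\<Sum>i=Suc k0..j. a k0 i * c' i) = (\<Sum>i=Suc k0..j. a k0 i * c i)"
        by (rule sum.cong) (auto simp: c'_def)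
      finally show ?thesis using True \<open>a k0 k0 \<noteq> 0\<close> by (simp add: c'_def)
    next
      case False
      then have "j - m \<le> k" using that k0_def by linarith
      then have "(\<Sum>i=k..j. a k i * c' i) = (\<Sum>i=k..j. a k i * c i)"
        using k0 by (intro sum.cong) (auto simp: c'_def)
      then show ?thesis using c_eq \<open>j - m \<le> k\<close> that by simp
    qed
    moreover have "\<forall>i>j. c' i = 0" using c_supp k0 by (auto simp: c'_def)
    ultimately show ?case by blast
  qed
  from this[of j] show ?thesis by auto
qed

lemma upper_triangular_system_homogeneous:
  fixes a :: "nat \<Rightarrow> nat \<Rightarrow> real"
  assumes diag: "\<forall>k\<le>j. a k k \<noteq> 0"
    and supp: "\<forall>i>j. e i = 0" and eq: "\<forall>k\<le>j. (\<Sum>i=k..j. a k i * e i) = 0"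
  shows "e i = 0"
proof (induction "j - i" arbitrary: i rule: less_induct)
  case less
  show ?case
  proof (cases "i \<le> j")
    case False then show ?thesis using supp by auto
  next
    case True
    have "(\<Sum>i'=Suc i..j. a i i' * e i') = 0"
      by (rule sum.neutral) (use less True in \<open>auto simp: supp\<close>)
    moreover have "(\<Sum>i'=i..j. a i i' * e i') = a i i * e i + (\<Sum>i'=Suc i..j. a i i' * e i')"
      using True by (simp add: sum.atLeast_Suc_atMost)
    ultimately show ?thesis using eq True diag by auto
  qed
qed

definition coef_matrix :: "real \<Rightarrow> nat \<Rightarrow> nat \<Rightarrow> real" where
  "coef_matrix \<mu> k i = 4 ^ k * (pochhammer (- real i) k * pochhammer (- real k) (i - k)
      * pochhammer \<mu> k / pochhammer \<mu> (i - k))"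

lemma coef_matrix_below_diag: "i < k \<Longrightarrow> coef_matrix \<mu> k i = 0"
  unfolding coef_matrix_def by (auto simp: pochhammer_eq_0_iff)

lemma coef_matrix_diag_neq_0: "\<mu> > 0 \<Longrightarrow> coef_matrix \<mu> k k \<noteq> 0"
  unfolding coef_matrix_def by (auto simp: pochhammer_eq_0_iff dest: pochhammer_pos[of \<mu> k])

lemma coef_matrix_0: "coef_matrix \<mu> 0 i = (if i = 0 then 1 else 0)"
  unfolding coef_matrix_def by (cases i) (auto simp: pochhammer_rec)

lemma coef_matrix_Suc_1: "coef_matrix \<mu> (Suc k) 1 = -4 * \<mu> * coef_matrix \<mu> k 0"
  by (cases k) (simp_all add: coef_matrix_def pochhammer_rec)

lemma coef_matrix_Suc_diag:
  "coef_matrix \<mu> (Suc k) (Suc k) = -4 * (real k + 1) * (\<mu> + real k) * coef_matrix \<mu> k k"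
proof -
  have "pochhammer (- real (Suc k)) (Suc k) = - (real k + 1) * pochhammer (- real k) k"
    by (simp add: pochhammer_rec algebra_simps)
  moreover have "pochhammer \<mu> (Suc k) = (\<mu> + real k) * pochhammer \<mu> k"
    by (simp add: pochhammer_rec' algebra_simps)
  ultimately show ?thesis
    unfolding coef_matrix_def by (simp only: diff_self_eq_0 power_Suc) (simp add: algebra_simps)
qed

lemma coef_matrix_Suc_above_diag:
  assumes "\<mu> > 0"
  shows "coef_matrix \<mu> (Suc k) (k + p + 2) =
           4 * (real (k + p) + 2) * (real (k + p) + 1) * coef_matrix \<mu> k (k + p)
         - 4 * (real (k + p) + 2) * (real (k + p) + 1 + \<mu>) * coef_matrix \<mu> k (k + p + 1)"
proof -
  define Q where "Q = pochhammer (- real (k + p + 1)) k"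
  define R where "R = pochhammer (- real k) p"
  define S where "S = pochhammer \<mu> k"
  define T where "T = pochhammer \<mu> p"
  have "T > 0" using assms by (simp add: T_def pochhammer_pos)
  have "\<mu> + real p > 0" "real k + real p + 1 > 0" using assms by simp_all
  \<comment> \<open>expand \<open>pochhammer (- real (k + p + 1)) (Suc k)\<close> from either end\<close>
  have P: "pochhammer (- real (k + p)) k = (real p + 1) * Q / (real k + real p + 1)"
  proof -
    have "pochhammer (- real (k + p + 1)) (Suc k) = - (real (k + p) + 1) * pochhammer (- real (k + p)) k"
      by (simp add: pochhammer_rec algebra_simps)
    moreover have "pochhammer (- real (k + p + 1)) (Suc k) = - (real p + 1) * Q"
      unfolding Q_def by (simp add: pochhammer_rec' algebra_simps)
    ultimately show ?thesis by (simp add: field_simps)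
  qed
  have e1: "pochhammer (- real (k + p + 2)) (Suc k) = - (real (k + p) + 2) * Q"
    unfolding Q_def by (simp add: pochhammer_rec algebra_simps)
  have e2: "pochhammer (- real (Suc k)) (Suc p) = - (real k + 1) * R"
    unfolding R_def by (simp add: pochhammer_rec algebra_simps)
  have e3: "pochhammer (- real k) (Suc p) = (real p - real k) * R"
    unfolding R_def by (simp add: pochhammer_rec' algebra_simps)
  have e4: "pochhammer \<mu> (Suc k) = (\<mu> + real k) * S"
    unfolding S_def by (simp add: pochhammer_rec' algebra_simps)
  have e5: "pochhammer \<mu> (Suc p) = (\<mu> + real p) * T"
    unfolding T_def by (simp add: pochhammer_rec' algebra_simps)
  have idx: "k + p + 2 - Suc k = Suc p" "k + p + 1 - k = Suc p" "k + p - k = p"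
    by simp_all
  show ?thesis
    unfolding coef_matrix_def idx e1 e2 e3 e4 e5 P
    unfolding Q_def[symmetric] R_def[symmetric] S_def[symmetric] T_def[symmetric]
    using \<open>T > 0\<close> \<open>\<mu> + real p > 0\<close> \<open>real k + real p + 1 > 0\<close>
    by (simp add: divide_simps) (simp add: algebra_simps)
qed

lemma coef_matrix_Suc_add_2:
  assumes "\<mu> > 0"
  shows "coef_matrix \<mu> (Suc k) (m + 2) =
           4 * (real m + 2) * (real m + 1) * coef_matrix \<mu> k m
         - 4 * (real m + 2) * (real m + 1 + \<mu>) * coef_matrix \<mu> k (m + 1)"
proof (cases "k \<le> m")
  case True
  then obtain p where "m = k + p" using le_Suc_ex by blast
  then show ?thesis using coef_matrix_Suc_above_diag[OF assms] by simp
next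
  case False
  then consider "k = m + 1" | "m + 2 \<le> k" by linarith
  then show ?thesis
  proof cases
    case 1
    then show ?thesis using coef_matrix_Suc_diag[of \<mu> "m + 1"]
      by (simp add: coef_matrix_below_diag algebra_simps)
  qed (simp add: coef_matrix_below_diag)
qed

definition laplacian_coefs :: "real \<Rightarrow> (nat \<Rightarrow> real) \<Rightarrow> nat \<Rightarrow> real" where
  "laplacian_coefs \<mu> c m =
     4 * (real m + 2) * (real m + 1) * c (m + 2) - 4 * (real m + 1) * (real m + \<mu>) * c (m + 1)"

lemma sum_atMost_shift_vanishing:
  fixes f :: "nat \<Rightarrow> 'a::comm_monoid_add"
  assumes "\<forall>i>N. f i = 0"
  shows "(\<Sum>i\<le>N. f i) = f 0 + (\<Sum>i\<le>N. f (Suc i))"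
proof -
  have "(\<Sum>i\<le>N. f i) = (\<Sum>i\<le>Suc N. f i)" using assms by simp
  also have "\<dots> = f 0 + (\<Sum>i\<le>N. f (Suc i))" by (rule sum.atMost_Suc_shift)
  finally show ?thesis .
qed

lemma coef_matrix_Suc_row:
  assumes "\<mu> > 0" and c: "\<forall>i>N. c i = 0"
  shows "(\<Sum>i\<le>N. coef_matrix \<mu> (Suc k) i * c i) = (\<Sum>m\<le>N. coef_matrix \<mu> k m * laplacian_coefs \<mu> c m)"
proof -
  let ?A = "coef_matrix \<mu>"
  have "(\<Sum>i\<le>N. ?A (Suc k) i * c i) = (\<Sum>i\<le>N. ?A (Suc k) (Suc i) * c (Suc i))"
    by (subst sum_atMost_shift_vanishing) (simp_all add: c coef_matrix_below_diag)
  also have "\<dots> = ?A (Suc k) 1 * c 1 + (\<Sum>m\<le>N. ?A (Suc k) (m + 2) * c (m + 2))"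
    by (subst sum_atMost_shift_vanishing) (simp_all add: c numeral_2_eq_2)
  also have "\<dots> = -4 * \<mu> * ?A k 0 * c 1 + (\<Sum>m\<le>N. (4 * (real m + 2) * (real m + 1) * ?A k m
                    - 4 * (real m + 2) * (real m + 1 + \<mu>) * ?A k (m + 1)) * c (m + 2))"
    by (simp only: coef_matrix_Suc_1 coef_matrix_Suc_add_2[OF \<open>\<mu> > 0\<close>])
  also have "\<dots> = (\<Sum>m\<le>N. ?A k m * laplacian_coefs \<mu> c m)"
  proof -
    have "(\<Sum>m\<le>N. ?A k m * (4 * (real m + 1) * (real m + \<mu>) * c (m + 1))) =
        ?A k 0 * (4 * \<mu> * c 1) + (\<Sum>m\<le>N. ?A k (m + 1) * (4 * (real m + 2) * (real m + 1 + \<mu>) * c (m + 2)))"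
      by (subst sum_atMost_shift_vanishing) (simp_all add: c algebra_simps numeral_2_eq_2)
    then show ?thesis
      unfolding laplacian_coefs_def
      by (simp add: algebra_simps sum_subtractf sum.distrib sum_distrib_left)
  qed
  finally show ?thesis .
qed

definition coef_system :: "real \<Rightarrow> nat \<Rightarrow> (nat \<Rightarrow> real) \<Rightarrow> bool" where
  "coef_system \<mu> j c \<longleftrightarrow>
     (\<forall>i>j. c i = 0) \<and> (\<forall>k\<le>j. (\<Sum>i\<le>j. coef_matrix \<mu> k i * c i) = (if k = j then 1 else 0))"

lemma sum_coef_matrix_atLeastAtMost:
  "k \<le> j \<Longrightarrow> (\<Sum>i\<le>j. coef_matrix \<mu> k i * c i) = (\<Sum>i=k..j. coef_matrix \<mu> k i * c i)"
  by (rule sum.mono_neutral_right) (auto simp: coef_matrix_below_diag)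

lemma coef_system_ex1:
  assumes "\<mu> > 0"
  shows "\<exists>!c. coef_system \<mu> j c"
proof -
  have diag: "\<forall>k\<le>j. coef_matrix \<mu> k k \<noteq> 0" using coef_matrix_diag_neq_0[OF assms] by auto
  obtain c where c: "\<forall>i>j. c i = 0"
    "\<forall>k\<le>j. (\<Sum>i=k..j. coef_matrix \<mu> k i * c i) = (if k = j then 1 else 0)"
    using upper_triangular_system_solvable[where a = "coef_matrix \<mu>" and b = "\<lambda>k. if k = j then 1 else 0", OF diag]
    by blast
  have "coef_system \<mu> j c" using c by (simp add: coef_system_def sum_coef_matrix_atLeastAtMost)
  moreover have "c' = c" if "coef_system \<mu> j c'" for c'
  proof
    fix i
    have "(\<lambda>i. c' i - c i) i = 0"
    proof (rule upper_triangular_system_homogeneous[where a = "coef_matrix \<mu>", OF diag])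
      show "\<forall>i>j. c' i - c i = 0" using that c by (auto simp: coef_system_def)
      show "\<forall>k\<le>j. (\<Sum>i=k..j. coef_matrix \<mu> k i * (c' i - c i)) = 0"
        using that c
        by (auto simp: coef_system_def sum_coef_matrix_atLeastAtMost right_diff_distrib sum_subtractf)
    qed
    then show "c' i = c i" by simp
  qed
  ultimately show ?thesis by blast
qed

lemma coef_system_coef:
  assumes "d > 0"
  shows "coef_system (real n + real d / 2) j (coef d n j)"
proof -
  let ?\<mu> = "real n + real d / 2"
  have "coef d n j = (THE c. coef_system ?\<mu> j c)"
    unfolding coef_def
    by (intro arg_cong[where f = The] ext)
      (simp only: sum_distrib_left coef_system_def sum_coef_matrix_atLeastAtMost cong: imp_cong,
        simp add: coef_matrix_def mult.assoc)
  moreover have "?\<mu> > 0" using assms by simp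
  ultimately show ?thesis by (simp add: theI'[OF coef_system_ex1])
qed

lemma coef_system_laplacian_coefs:
  assumes "\<mu> > 0" and c: "coef_system \<mu> (Suc j) c"
  shows "coef_system \<mu> j (laplacian_coefs \<mu> c)"
proof -
  have c_supp: "\<forall>i>Suc j. c i = 0" using c by (simp add: coef_system_def)
  then have supp: "\<forall>i>j. laplacian_coefs \<mu> c i = 0" by (simp add: laplacian_coefs_def)
  have "(\<Sum>i\<le>j. coef_matrix \<mu> k i * laplacian_coefs \<mu> c i) = (if k = j then 1 else 0)"
    if "k \<le> j" for k
  proof -
    have "(\<Sum>i\<le>j. coef_matrix \<mu> k i * laplacian_coefs \<mu> c i)
          = (\<Sum>i\<le>Suc j. coef_matrix \<mu> k i * laplacian_coefs \<mu> c i)"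
      using supp by simp
    also have "\<dots> = (\<Sum>i\<le>Suc j. coef_matrix \<mu> (Suc k) i * c i)"
      by (rule coef_matrix_Suc_row[OF \<open>\<mu> > 0\<close> c_supp, symmetric])
    also have "\<dots> = (if k = j then 1 else 0)" using c that by (simp add: coef_system_def)
    finally show ?thesis .
  qed
  with supp show ?thesis by (simp add: coef_system_def)
qed

lemma coef_system_at_0:
  assumes "coef_system \<mu> j c"
  shows "c 0 = (if j = 0 then 1 else 0)"
proof -
  have "(\<Sum>i\<le>j. coef_matrix \<mu> 0 i * c i) = (\<Sum>i\<le>j. if i = 0 then c 0 else 0)"
    by (rule sum.cong) (auto simp: coef_matrix_0)
  then have "(\<Sum>i\<le>j. coef_matrix \<mu> 0 i * c i) = c 0" by simp
  then show ?thesis using assms unfolding coef_system_def by (metis le0)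
qed

definition coef_poly :: "(nat \<Rightarrow> real) \<Rightarrow> nat \<Rightarrow> real poly" where
  "coef_poly c N = (\<Sum>i\<le>N. monom (c i) i)"

lemma coeff_coef_poly: "\<forall>i>N. c i = 0 \<Longrightarrow> coeff (coef_poly c N) = c"
  by (auto simp: coef_poly_def coeff_sum coeff_monom fun_eq_iff not_le)

lemma poly_coef_poly: "poly (coef_poly c N) s = (\<Sum>i\<le>N. c i * s ^ i)"
  by (simp add: coef_poly_def poly_sum poly_monom)

definition radial_laplacian :: "real \<Rightarrow> real poly \<Rightarrow> real poly" where
  "radial_laplacian \<mu> p = smult 4 ([:1, -1:] * pderiv (pderiv p)) - smult (4 * \<mu>) (pderiv p)"

lemma coeff_radial_laplacian: "coeff (radial_laplacian \<mu> p) m = laplacian_coefs \<mu> (coeff p) m"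
  by (cases m) (simp_all add: radial_laplacian_def laplacian_coefs_def coeff_pderiv algebra_simps)

lemma Ynj_eq_coef_poly:
  fixes Y :: "'a::euclidean_space \<Rightarrow> real"
  assumes "j \<ge> 0"
  shows "Ynj n j Y = (\<lambda>x. poly (coef_poly (coef DIM('a) n (nat j)) (nat j)) (1 - (norm x)\<^sup>2) * Y x)"
  using assms by (auto simp: Ynj_def poly_coef_poly sum_distrib_right atLeast0AtMost)

lemma differentiable_prod:
  fixes f :: "'i \<Rightarrow> 'a::real_normed_vector \<Rightarrow> 'b::real_normed_field"
  assumes "\<And>i. i \<in> I \<Longrightarrow> f i differentiable (at x)"
  shows "(\<lambda>x. \<Prod>i\<in>I. f i x) differentiable (at x)"
proof -
  obtain D where "\<And>i. i \<in> I \<Longrightarrow> (f i has_derivative D i) (at x)"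
    using assms unfolding differentiable_def by metis
  then show ?thesis unfolding differentiable_def by (blast intro: has_derivative_prod)
qed

lemma homogeneous_poly_on_line:
  assumes "homogeneous_poly n Y"
  obtains p where "\<And>t. Y (x + t *\<^sub>R b) = poly p t"
proof -
  obtain A c where Y: "\<And>x. Y x = (\<Sum>\<alpha>\<in>A. c \<alpha> * (\<Prod>b\<in>Basis. (x \<bullet> b) ^ \<alpha> b))"
    using assms unfolding homogeneous_poly_def by blast
  show ?thesis
    by (rule that[of "\<Sum>\<alpha>\<in>A. smult (c \<alpha>) (\<Prod>b'\<in>Basis. [:x \<bullet> b', b \<bullet> b':] ^ \<alpha> b')"])
      (simp add: Y poly_sum poly_prod poly_power inner_add_left algebra_simps)
qed

lemma homogeneous_poly_differentiable:
  assumes "homogeneous_poly n Y"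
  shows "Y differentiable (at x)"
proof -
  obtain A c where "finite A" and "Y = (\<lambda>x. \<Sum>\<alpha>\<in>A. c \<alpha> * (\<Prod>b\<in>Basis. (x \<bullet> b) ^ \<alpha> b))"
    using assms unfolding homogeneous_poly_def by blast
  then show ?thesis
    by (auto intro!: differentiable_sum differentiable_mult differentiable_prod differentiable_power
        differentiable_inner)
qed

lemma homogeneous_poly_scaleR:
  assumes "homogeneous_poly n Y"
  shows "Y (s *\<^sub>R x) = s ^ n * Y x"
proof -
  obtain A c where deg: "\<forall>\<alpha>\<in>A. (\<Sum>b\<in>Basis. \<alpha> b) = n"
    and Y: "\<And>x. Y x = (\<Sum>\<alpha>\<in>A. c \<alpha> * (\<Prod>b\<in>Basis. (x \<bullet> b) ^ \<alpha> b))"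
    using assms unfolding homogeneous_poly_def by blast
  have "(\<Prod>b\<in>Basis. ((s *\<^sub>R x) \<bullet> b) ^ \<alpha> b) = s ^ n * (\<Prod>b\<in>Basis. (x \<bullet> b) ^ \<alpha> b)"
    if "\<alpha> \<in> A" for \<alpha>
    using deg that by (simp add: power_mult_distrib prod.distrib power_sum[symmetric])
  then show ?thesis by (simp add: Y sum_distrib_left algebra_simps)
qed

lemma homogeneous_poly_euler:
  assumes Y: "homogeneous_poly n Y" and D: "(Y has_derivative D) (at x)"
  shows "(\<Sum>b\<in>Basis. (x \<bullet> b) * D b) = real n * Y x"
proof -
  have "linear D" using has_derivative_linear[OF D] .
  have "((\<lambda>s. Y (s *\<^sub>R x)) has_derivative (\<lambda>h. D (h *\<^sub>R x))) (at 1)"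
    by (rule has_derivative_compose[of "\<lambda>s. s *\<^sub>R x"]) (auto intro!: derivative_eq_intros D)
  moreover have "(\<lambda>h. D (h *\<^sub>R x)) = (*) (D x)"
    using \<open>linear D\<close> by (auto simp: linear_cmul)
  ultimately have "((\<lambda>s. Y (s *\<^sub>R x)) has_real_derivative D x) (at 1)"
    by (simp add: has_field_derivative_def)
  moreover have "((\<lambda>s. Y (s *\<^sub>R x)) has_real_derivative real n * Y x) (at 1)"
    unfolding homogeneous_poly_scaleR[OF Y] by (auto intro!: derivative_eq_intros)
  ultimately have "D x = real n * Y x" by (rule DERIV_unique)
  moreover have "D x = D (\<Sum>b\<in>Basis. (x \<bullet> b) *\<^sub>R b)"
    by (simp add: euclidean_representation)
  ultimately show ?thesis
    using \<open>linear D\<close> by (simp add: linear_sum linear_cmul)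
qed

lemma deriv2_radial_product:
  fixes G G' G'' v v' v'' :: "real \<Rightarrow> real"
  assumes G: "\<And>s. (G has_real_derivative G' s) (at s)" "\<And>s. (G' has_real_derivative G'' s) (at s)"
    and v: "\<And>t. (v has_real_derivative v' t) (at t)" "\<And>t. (v' has_real_derivative v'' t) (at t)"
  shows "deriv (deriv (\<lambda>t. G (s - 2 * a * t - t\<^sup>2) * v t)) 0
       = (4 * a\<^sup>2 * G'' s - 2 * G' s) * v 0 - 4 * a * G' s * v' 0 + G s * v'' 0"
proof -
  define \<phi> where "\<phi> t = s - 2 * a * t - t\<^sup>2" for t
  define u' where "u' t = G' (\<phi> t) * (- 2 * a - 2 * t)" for t
  have u: "((\<lambda>t. G (\<phi> t)) has_real_derivative u' t) (at t)" for t
    unfolding u'_def \<phi>_def by (rule DERIV_chain2[OF G(1)]) (auto intro!: derivative_eq_intros)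
  have u': "(u' has_real_derivative G'' (\<phi> t) * (- 2 * a - 2 * t) ^ 2 - 2 * G' (\<phi> t)) (at t)" for t
  proof -
    have "((\<lambda>t. G' (\<phi> t)) has_real_derivative G'' (\<phi> t) * (- 2 * a - 2 * t)) (at t)"
      unfolding \<phi>_def by (rule DERIV_chain2[OF G(2)]) (auto intro!: derivative_eq_intros)
    then show ?thesis
      unfolding u'_def by (auto intro!: derivative_eq_intros simp: power2_eq_square algebra_simps)
  qed
  have "deriv (\<lambda>t. G (\<phi> t) * v t) = (\<lambda>t. u' t * v t + G (\<phi> t) * v' t)"
    by (rule ext, rule DERIV_imp_deriv) (auto intro!: derivative_eq_intros u v)
  moreover have "((\<lambda>t. u' t * v t + G (\<phi> t) * v' t) has_real_derivative
      (G'' (\<phi> 0) * (- 2 * a) ^ 2 - 2 * G' (\<phi> 0)) * v 0 + 2 * u' 0 * v' 0 + G (\<phi> 0) * v'' 0) (at 0)"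
    by (auto intro!: derivative_eq_intros u u' v)
  ultimately show ?thesis
    unfolding \<phi>_def[abs_def] by (simp add: DERIV_imp_deriv u'_def \<phi>_def power2_eq_square)
qed

lemma deriv2_radial_times_homogeneous_poly:
  fixes Y :: "'a::euclidean_space \<Rightarrow> real"
  assumes G: "\<And>s. (G has_real_derivative G' s) (at s)" "\<And>s. (G' has_real_derivative G'' s) (at s)"
    and Y: "homogeneous_poly n Y" and D: "(Y has_derivative D) (at x)" and b: "b \<in> Basis"
  shows "deriv (deriv (\<lambda>t. G (1 - (norm (x + t *\<^sub>R b))\<^sup>2) * Y (x + t *\<^sub>R b))) 0
     = (4 * (x \<bullet> b)\<^sup>2 * G'' (1 - (norm x)\<^sup>2) - 2 * G' (1 - (norm x)\<^sup>2)) * Y x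
       - 4 * (x \<bullet> b) * G' (1 - (norm x)\<^sup>2) * D b
       + G (1 - (norm x)\<^sup>2) * deriv (deriv (\<lambda>t. Y (x + t *\<^sub>R b))) 0"
proof -
  obtain p where p: "\<And>t. Y (x + t *\<^sub>R b) = poly p t" using homogeneous_poly_on_line[OF Y, of x b] by blast
  then have line: "(\<lambda>t. Y (x + t *\<^sub>R b)) = poly p" by auto
  have "(norm (x + t *\<^sub>R b))\<^sup>2 = (norm x)\<^sup>2 + 2 * (x \<bullet> b) * t + t\<^sup>2" for t
    using b unfolding power2_norm_eq_inner
    by (simp add: inner_add_left inner_add_right inner_commute algebra_simps power2_eq_square)
  then have radial: "(\<lambda>t. G (1 - (norm (x + t *\<^sub>R b))\<^sup>2) * Y (x + t *\<^sub>R b))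
      = (\<lambda>t. G ((1 - (norm x)\<^sup>2) - 2 * (x \<bullet> b) * t - t\<^sup>2) * poly p t)"
    by (simp add: p algebra_simps)
  have "deriv (poly p) = poly (pderiv p)" "deriv (poly (pderiv p)) = poly (pderiv (pderiv p))"
    by (simp_all add: DERIV_imp_deriv fun_eq_iff)
  moreover have "D b = poly (pderiv p) 0"
  proof -
    have "((\<lambda>t. Y (x + t *\<^sub>R b)) has_derivative (\<lambda>h. D (h *\<^sub>R b))) (at 0)"
      by (rule has_derivative_compose[of "\<lambda>t. x + t *\<^sub>R b"]) (auto intro!: derivative_eq_intros D)
    moreover have "(\<lambda>h. D (h *\<^sub>R b)) = (*) (D b)"
      using has_derivative_linear[OF D] by (auto simp: linear_cmul)
    ultimately have "(poly p has_real_derivative D b) (at 0)"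
      by (simp add: has_field_derivative_def line)
    then show ?thesis using DERIV_unique poly_DERIV by blast
  qed
  ultimately show ?thesis
    unfolding radial line deriv2_radial_product[OF G poly_DERIV poly_DERIV] by (simp add: p[of 0, symmetric])
qed

lemma laplacian_radial_times_harmonic:
  fixes Y :: "'a::euclidean_space \<Rightarrow> real"
  assumes G: "\<And>s. (G has_real_derivative G' s) (at s)" "\<And>s. (G' has_real_derivative G'' s) (at s)"
    and Y: "Y \<in> harmonic_hom n"
  shows "laplacian (\<lambda>z. G (1 - (norm z)\<^sup>2) * Y z) x
     = (4 * (norm x)\<^sup>2 * G'' (1 - (norm x)\<^sup>2)
        - (2 * real DIM('a) + 4 * real n) * G' (1 - (norm x)\<^sup>2)) * Y x"
proof -
  have hom: "homogeneous_poly n Y" and harm: "laplacian Y x = 0"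
    using Y by (auto simp: harmonic_hom_def)
  obtain D where D: "(Y has_derivative D) (at x)"
    using homogeneous_poly_differentiable[OF hom] unfolding differentiable_def by blast
  define s where "s = 1 - (norm x)\<^sup>2"
  have "laplacian (\<lambda>z. G (1 - (norm z)\<^sup>2) * Y z) x =
     (\<Sum>b\<in>Basis. (4 * (x \<bullet> b)\<^sup>2 * G'' s - 2 * G' s) * Y x
       - 4 * (x \<bullet> b) * G' s * D b + G s * deriv (deriv (\<lambda>t. Y (x + t *\<^sub>R b))) 0)"
    unfolding laplacian_def s_def
    by (rule sum.cong) (simp_all add: deriv2_radial_times_homogeneous_poly[OF G hom D])
  also have "\<dots> = 4 * G'' s * Y x * (\<Sum>b\<in>Basis. (x \<bullet> b)\<^sup>2) - 2 * G' s * Y x * real DIM('a)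
      - 4 * G' s * (\<Sum>b\<in>Basis. (x \<bullet> b) * D b) + G s * laplacian Y x"
    unfolding laplacian_def
    by (simp add: sum.distrib sum_subtractf sum_distrib_left algebra_simps)
  also have "(\<Sum>b\<in>Basis. (x \<bullet> b)\<^sup>2) = (norm x)\<^sup>2"
    unfolding power2_norm_eq_inner euclidean_inner[of x x] by (simp add: power2_eq_square)
  also have "(\<Sum>b\<in>Basis. (x \<bullet> b) * D b) = real n * Y x"
    by (rule homogeneous_poly_euler[OF hom D])
  finally show ?thesis using harm unfolding s_def by (simp add: algebra_simps)
qed

lemma laplacian_poly_radial_times_harmonic:
  fixes Y :: "'a::euclidean_space \<Rightarrow> real"
  assumes "Y \<in> harmonic_hom n"
  shows "laplacian (\<lambda>z. poly p (1 - (norm z)\<^sup>2) * Y z) x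
       = poly (radial_laplacian (real n + real DIM('a) / 2) p) (1 - (norm x)\<^sup>2) * Y x"
  using laplacian_radial_times_harmonic[OF poly_DERIV poly_DERIV assms]
  by (simp add: radial_laplacian_def algebra_simps)

lemma radial_laplacian_coef_poly_coef:
  assumes "d > 0"
  shows "radial_laplacian (real n + real d / 2) (coef_poly (coef d n j) j)
       = (if j = 0 then 0 else coef_poly (coef d n (j - 1)) (j - 1))"
proof (cases j)
  case 0
  then show ?thesis by (simp add: coef_poly_def radial_laplacian_def pderiv_monom)
next
  case (Suc i)
  let ?\<mu> = "real n + real d / 2"
  have "?\<mu> > 0" using assms by simp
  have sys: "coef_system ?\<mu> (Suc i) (coef d n (Suc i))" "coef_system ?\<mu> i (coef d n i)"
    using coef_system_coef[OF assms] by blast+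
  then have supp: "\<forall>k>Suc i. coef d n (Suc i) k = 0" "\<forall>k>i. coef d n i k = 0"
    by (simp_all add: coef_system_def)
  have "laplacian_coefs ?\<mu> (coef d n (Suc i)) = coef d n i"
    using coef_system_laplacian_coefs[OF \<open>?\<mu> > 0\<close>] sys coef_system_ex1[OF \<open>?\<mu> > 0\<close>, of i]
    by blast
  then show ?thesis
    using Suc by (intro poly_eqI) (simp add: coeff_radial_laplacian coeff_coef_poly supp)
qed

lemma laplacian_Ynj:
  fixes Y :: "'a::euclidean_space \<Rightarrow> real"
  assumes "Y \<in> harmonic_hom n"
  shows "laplacian (Ynj n j Y) = Ynj n (j - 1) Y"
proof
  fix x
  consider "j < 0" | "j = 0" | "j > 0" by linarith
  then show "laplacian (Ynj n j Y) x = Ynj n (j - 1) Y x"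
  proof cases
    case 1
    then show ?thesis by (simp add: Ynj_def laplacian_def)
  next
    case 2
    then show ?thesis
      by (simp add: Ynj_eq_coef_poly laplacian_poly_radial_times_harmonic[OF assms]
          radial_laplacian_coef_poly_coef Ynj_def)
  next
    case 3
    then have "nat (j - 1) = nat j - 1" "j - 1 \<ge> 0" by simp_all
    with 3 show ?thesis
      by (simp add: Ynj_eq_coef_poly laplacian_poly_radial_times_harmonic[OF assms]
          radial_laplacian_coef_poly_coef)
  qed
qed

lemma Ynj_on_sphere:
  fixes Y :: "'a::euclidean_space \<Rightarrow> real"
  assumes "norm \<xi> = 1"
  shows "Ynj n j Y \<xi> = (if j = 0 then Y \<xi> else 0)"
proof (cases "j < 0")
  case True
  then show ?thesis by (simp add: Ynj_def)
next
  case False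
  have "coef_system (real n + real DIM('a) / 2) (nat j) (coef DIM('a) n (nat j))"
    by (rule coef_system_coef) simp
  then show ?thesis
    using False assms by (simp add: Ynj_eq_coef_poly poly_coef_poly coef_system_at_0)
qed

theorem lemma3p6:
  fixes Y :: "'a::euclidean_space \<Rightarrow> real" and n s :: nat and j :: int
  assumes "Y \<in> harmonic_hom n"
  shows "(\<forall>x. norm x \<le> 1 \<longrightarrow> (laplacian ^^ s) (Ynj n j Y) x = Ynj n (j - int s) Y x)
       \<and> (\<forall>\<xi>. norm \<xi> = 1 \<longrightarrow> (laplacian ^^ s) (Ynj n j Y) \<xi> = (if int s = j then Y \<xi> else 0))"
proof -
  have "(laplacian ^^ s) (Ynj n j Y) = Ynj n (j - int s) Y"
    by (induction s) (simp_all add: laplacian_Ynj[OF assms] algebra_simps)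
  then show ?thesis by (simp add: Ynj_on_sphere)
qed

end
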